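(* Let $(\mathbb X,S)$ be a minimal subshift over a finite alphabet satisfying the Boshernitzan condition, with unique invariant measure $\mu$. Then every eigenvalue $e^{2\pi i\alpha}$ with $\alpha\in\mathbb Q$ of the Koopman operator $f\mapsto f\circ S$ on $L^2(\mathbb X,\mu)$ is a topological eigenvalue of $(\mathbb X,S)$, i.e. admits a continuous eigenfunction.
   Context: Boshernitzan condition: there is a shift-invariant probability measure $\nu$ with $\limsup_n n\min\{\nu[u]:u\in\mathcal L_n(\mathbb X)\}>0$, with $\mathcal L_n$ the length-$n$ words occurring in $\mathbb X$ and $[u]$ the cylinder set of $u$ at position 0. A topological eigenvalue is $z$ with $f\circ S=zf$ for some continuous $f\not\equiv 0$. *)

theory Defs
  imports "HOL-Probability.Probability" "HOL-Library.Liminf_Limsup"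
begin

definition shift_top :: "(int \<Rightarrow> 'a) topology" where
  "shift_top = product_topology (\<lambda>_. discrete_topology UNIV) UNIV"

definition shift :: "(int \<Rightarrow> 'a) \<Rightarrow> (int \<Rightarrow> 'a)" where
  "shift x = (\<lambda>n. x (n + 1))"

definition subshift :: "(int \<Rightarrow> 'a::finite) set \<Rightarrow> bool" where
  "subshift X \<longleftrightarrow> X \<noteq> {} \<and> closedin shift_top X \<and> shift ` X = X"

definition minimal_subshift :: "(int \<Rightarrow> 'a::finite) set \<Rightarrow> bool" where
  "minimal_subshift X \<longleftrightarrow> subshift X \<and>
     (\<forall>Y. Y \<subseteq> X \<and> Y \<noteq> {} \<and> closedin shift_top Y \<and> shift ` Y \<subseteq> Y \<longrightarrow> Y = X)"

definition borel_X :: "(int \<Rightarrow> 'a) set \<Rightarrow> (int \<Rightarrow> 'a) measure" where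
  "borel_X X = sigma X {U. openin (subtopology shift_top X) U}"

definition invariant_prob :: "(int \<Rightarrow> 'a::finite) set \<Rightarrow> (int \<Rightarrow> 'a) measure \<Rightarrow> bool" where
  "invariant_prob X \<nu> \<longleftrightarrow> prob_space \<nu> \<and> sets \<nu> = sets (borel_X X) \<and> space \<nu> = X \<and>
     (\<forall>A \<in> sets \<nu>. emeasure \<nu> (shift -` A \<inter> X) = emeasure \<nu> A)"

definition lang :: "(int \<Rightarrow> 'a) set \<Rightarrow> nat \<Rightarrow> 'a list set" where
  "lang X n = {u. length u = n \<and> (\<exists>x\<in>X. \<forall>i<n. x (int i) = u ! i)}"

definition cyl :: "(int \<Rightarrow> 'a) set \<Rightarrow> 'a list \<Rightarrow> (int \<Rightarrow> 'a) set" where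
  "cyl X u = {x\<in>X. \<forall>i<length u. x (int i) = u ! i}"

definition boshernitzan :: "(int \<Rightarrow> 'a::finite) set \<Rightarrow> bool" where
  "boshernitzan X \<longleftrightarrow> (\<exists>\<nu>. invariant_prob X \<nu> \<and>
     limsup (\<lambda>n. ereal (real n * Min ((\<lambda>u. measure \<nu> (cyl X u)) ` lang X n))) > 0)"

definition L2_eigenvalue :: "(int \<Rightarrow> 'a) measure \<Rightarrow> complex \<Rightarrow> bool" where
  "L2_eigenvalue \<mu> z \<longleftrightarrow> (\<exists>f :: (int \<Rightarrow> 'a) \<Rightarrow> complex.
     f \<in> borel_measurable \<mu> \<and> integrable \<mu> (\<lambda>x. (cmod (f x))\<^sup>2) \<and>
     \<not> (AE x in \<mu>. f x = 0) \<and> (AE x in \<mu>. f (shift x) = z * f x))"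

definition topological_eigenvalue :: "(int \<Rightarrow> 'a) set \<Rightarrow> complex \<Rightarrow> bool" where
  "topological_eigenvalue X z \<longleftrightarrow> (\<exists>f :: (int \<Rightarrow> 'a) \<Rightarrow> complex.
     continuous_map (subtopology shift_top X) euclidean f \<and> (\<exists>x\<in>X. f x \<noteq> 0) \<and>
     (\<forall>x\<in>X. f (shift x) = z * f x))"

end

theory Submission
  imports Defs "HOL-Complex_Analysis.Cauchy_Integral_Theorem" "HOL-Library.Real_Mod"
begin

text \<open>
  Write \<open>z = exp (2 pi i a / b)\<close>. Rounding the argument of a measurable eigenfunction down to a
  multiple of \<open>2 pi / b\<close> commutes with multiplication by \<open>z\<close>, so there is an eigenfunction
  \<open>R\<close> with values in the \<open>b\<close>-th roots of unity and \<open>0\<close>. Approximate \<open>R\<close> in measure by a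
  function \<open>P\<close> of the coordinates in \<open>[-l, l]\<close>. Along the orbit of \<open>x\<close>, the reading
  \<open>P (S\<^sup>k x)\<close> at each time \<open>k\<close> of a window of length \<open>n\<close> is a vote for the value
  \<open>z\<^sup>-\<^sup>k P (S\<^sup>k x)\<close> at \<open>x\<close>; by invariance and the Markov inequality, few points fail to
  give \<open>R x\<close> three quarters of the votes. The maximal number of votes for one value changes by
  at most one under the shift and depends only on a cylinder of length \<open>N = n + 2 l\<close>. If it
  were below \<open>n/2 + 2\<close> somewhere, then by minimality an orbit would run through all values
  between \<open>n/2 + 2\<close> and \<open>3n/4\<close>, each level would contain a cylinder of measure at least
  \<open>\<delta>/N\<close> by the Boshernitzan condition, and these about \<open>n/4\<close> disjoint cylinders would not
  fit into the small set of weak majorities. So the majority value exists everywhere; it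
  depends on finitely many coordinates, hence is continuous, and it is an eigenfunction.
\<close>

section \<open>Functions of finitely many coordinates\<close>

lemma topspace_shift_top [simp]: "topspace shift_top = UNIV"
  by (simp add: shift_top_def)

lemma continuous_map_shift: "continuous_map shift_top shift_top shift"
  unfolding shift_top_def
  by (auto simp: continuous_map_componentwise_UNIV shift_def intro!: continuous_map_product_projection)

lemma funpow_shift_apply: "(shift ^^ k) x i = x (i + int k)"
  by (induction k arbitrary: i) (simp_all add: shift_def algebra_simps)

lemma subshift_shift_in: "subshift X \<Longrightarrow> x \<in> X \<Longrightarrow> shift x \<in> X"
  unfolding subshift_def by blast

lemma subshift_funpow_shift_in: "subshift X \<Longrightarrow> x \<in> X \<Longrightarrow> (shift ^^ k) x \<in> X"
  by (induction k) (simp_all add: subshift_shift_in)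

definition depends_only_on :: "(int \<Rightarrow> 'a) set \<Rightarrow> int set \<Rightarrow> ((int \<Rightarrow> 'a) \<Rightarrow> 'b) \<Rightarrow> bool" where
  "depends_only_on X F g \<longleftrightarrow> (\<forall>x\<in>X. \<forall>y\<in>X. (\<forall>i\<in>F. y i = x i) \<longrightarrow> g y = g x)"

lemma depends_only_onD:
  "depends_only_on X F g \<Longrightarrow> x \<in> X \<Longrightarrow> y \<in> X \<Longrightarrow> (\<And>i. i \<in> F \<Longrightarrow> y i = x i) \<Longrightarrow> g y = g x"
  unfolding depends_only_on_def by blast

lemma depends_only_on_mono: "depends_only_on X F g \<Longrightarrow> F \<subseteq> G \<Longrightarrow> depends_only_on X G g"
  unfolding depends_only_on_def by blast

lemma depends_only_on_comp: "depends_only_on X F g \<Longrightarrow> depends_only_on X F (\<lambda>x. h (g x))"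
  unfolding depends_only_on_def by metis

lemma openin_shift_top_if_finite_window:
  assumes "finite F" and "\<And>x y. x \<in> T \<Longrightarrow> (\<forall>i\<in>F. y i = x i) \<Longrightarrow> y \<in> T"
  shows "openin shift_top T"
  unfolding shift_top_def openin_product_topology_alt
proof
  fix x assume "x \<in> T"
  define U where "U i = (if i \<in> F then {x i} else UNIV)" for i
  have "{i. U i \<noteq> UNIV} \<subseteq> F"
    by (auto simp: U_def)
  then have "finite {i. U i \<noteq> UNIV}"
    using assms(1) finite_subset by blast
  moreover have "x \<in> Pi\<^sub>E UNIV U"
    by (simp add: U_def PiE_UNIV_domain)
  moreover have "Pi\<^sub>E UNIV U \<subseteq> T"
  proof
    fix y assume "y \<in> Pi\<^sub>E UNIV U"
    then have "y i \<in> U i" for i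
      by (simp add: PiE_UNIV_domain Pi_iff)
    then have "\<forall>i\<in>F. y i = x i"
      by (metis U_def singletonD)
    then show "y \<in> T"
      using assms(2) \<open>x \<in> T\<close> by blast
  qed
  ultimately show "\<exists>U. finite {i \<in> UNIV. U i \<noteq> topspace (discrete_topology UNIV)} \<and>
      (\<forall>i\<in>UNIV. openin (discrete_topology UNIV) (U i)) \<and> x \<in> Pi\<^sub>E UNIV U \<and> Pi\<^sub>E UNIV U \<subseteq> T"
    by (intro exI[of _ U]) simp
qed

lemma openin_shift_top_window_nhd:
  assumes "openin shift_top T" "x \<in> T"
  obtains l where "\<And>y. \<forall>i\<in>{-int l..int l}. y i = x i \<Longrightarrow> y \<in> T"
proof -
  obtain U where U: "finite {i. U i \<noteq> UNIV}" "x \<in> Pi\<^sub>E UNIV U" "Pi\<^sub>E UNIV U \<subseteq> T"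
    using assms unfolding shift_top_def openin_product_topology_alt by auto
  obtain k where k: "abs ` {i. U i \<noteq> UNIV} \<subseteq> {..<k}"
    using U(1) finite_int_iff_bounded by blast
  have "y \<in> T" if "\<forall>i\<in>{-int (nat k)..int (nat k)}. y i = x i" for y
  proof -
    have "y i \<in> U i" for i
    proof (cases "U i = UNIV")
      case False
      then have "\<bar>i\<bar> < k"
        using k by auto
      then have "i \<in> {-int (nat k)..int (nat k)}"
        by auto
      then have "y i = x i"
        using that by blast
      then show ?thesis
        using U(2) by (simp add: PiE_UNIV_domain Pi_iff)
    qed simp
    then show ?thesis
      using U(3) by auto
  qed
  then show ?thesis
    by (rule that)
qed

lemma openin_subtopology_if_depends_only_on:
  assumes "finite F" "depends_only_on X F p"
  shows "openin (subtopology shift_top X) {x \<in> X. p x}"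
proof -
  define T where "T = {y. \<exists>x\<in>X. p x \<and> (\<forall>i\<in>F. y i = x i)}"
  have "openin shift_top T"
    by (rule openin_shift_top_if_finite_window[OF assms(1)]) (auto simp: T_def)
  moreover have "{x \<in> X. p x} = T \<inter> X"
  proof
    show "{x \<in> X. p x} \<subseteq> T \<inter> X"
      by (auto simp: T_def)
    show "T \<inter> X \<subseteq> {x \<in> X. p x}"
    proof
      fix y assume "y \<in> T \<inter> X"
      then obtain x where "x \<in> X" "p x" "\<forall>i\<in>F. y i = x i" "y \<in> X"
        by (auto simp: T_def)
      then show "y \<in> {x \<in> X. p x}"
        using depends_only_onD[OF assms(2), of x y] by simp
    qed
  qed
  ultimately show ?thesis
    by (auto simp: openin_subtopology)
qed

lemma continuous_map_if_depends_only_on: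
  fixes g :: "(int \<Rightarrow> 'a) \<Rightarrow> 'b::topological_space"
  assumes "finite F" "depends_only_on X F g"
  shows "continuous_map (subtopology shift_top X) euclidean g"
  unfolding continuous_map_def
proof (intro conjI allI impI)
  fix U :: "'b set"
  have "openin (subtopology shift_top X) {x \<in> X. g x \<in> U}"
    by (rule openin_subtopology_if_depends_only_on[OF assms(1) depends_only_on_comp[OF assms(2)]])
  then show "openin (subtopology shift_top X) {x \<in> topspace (subtopology shift_top X). g x \<in> U}"
    by simp
qed simp

definition local_set :: "(int \<Rightarrow> 'a) set \<Rightarrow> nat \<Rightarrow> (int \<Rightarrow> 'a) set \<Rightarrow> bool" where
  "local_set X l C \<longleftrightarrow> C \<subseteq> X \<and> depends_only_on X {-int l..int l} (\<lambda>x. x \<in> C)"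

lemma local_set_mono: "local_set X l C \<Longrightarrow> l \<le> l' \<Longrightarrow> local_set X l' C"
  unfolding local_set_def by (auto elim!: depends_only_on_mono)

lemma local_set_Un: "local_set X l C \<Longrightarrow> local_set X l D \<Longrightarrow> local_set X l (C \<union> D)"
  unfolding local_set_def depends_only_on_def by blast

lemma local_set_Diff: "local_set X l C \<Longrightarrow> local_set X l (X - C)"
  unfolding local_set_def depends_only_on_def by blast

lemma local_set_empty: "local_set X l {}"
  unfolding local_set_def depends_only_on_def by blast

lemma depends_only_on_select_local_set:
  assumes "\<And>c. c \<in> \<Lambda> \<Longrightarrow> local_set X l (C c)"
  shows "depends_only_on X {-int l..int l} (\<lambda>x. SOME c. c \<in> \<Lambda> \<and> x \<in> C c)"
proof (unfold depends_only_on_def, intro ballI impI)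
  fix x y assume xy: "x \<in> X" "y \<in> X" and "\<forall>i\<in>{-int l..int l}. y i = x i"
  then have agree: "\<And>i. i \<in> {-int l..int l} \<Longrightarrow> y i = x i"
    by blast
  have "(y \<in> C c) = (x \<in> C c)" if "c \<in> \<Lambda>" for c
  proof -
    have "depends_only_on X {-int l..int l} (\<lambda>x. x \<in> C c)"
      using assms[OF that] by (simp add: local_set_def)
    from depends_only_onD[OF this xy agree] show ?thesis
      by simp
  qed
  then have "(\<lambda>c. c \<in> \<Lambda> \<and> y \<in> C c) = (\<lambda>c. c \<in> \<Lambda> \<and> x \<in> C c)"
    by blast
  then show "(SOME c. c \<in> \<Lambda> \<and> y \<in> C c) = (SOME c. c \<in> \<Lambda> \<and> x \<in> C c)"
    by simp
qed

lemma minimal_subshift_orbit_meets_window: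
  assumes "minimal_subshift X" "finite F" "x \<in> X" "y \<in> X"
  obtains k where "\<forall>i\<in>F. (shift ^^ k) x i = y i"
proof -
  have sub: "subshift X"
    using assms(1) by (simp add: minimal_subshift_def)
  define Orb where "Orb = range (\<lambda>k. (shift ^^ k) x)"
  define Y where "Y = shift_top closure_of Orb"
  have "Y \<subseteq> X"
    unfolding Y_def Orb_def
    using sub assms(3) subshift_funpow_shift_in
    by (intro closure_of_minimal) (auto simp: subshift_def)
  moreover have "Y \<noteq> {}"
    using closure_of_subset[of Orb shift_top] by (auto simp: Y_def Orb_def)
  moreover have "closedin shift_top Y"
    by (simp add: Y_def)
  moreover have "shift ` Y \<subseteq> Y"
  proof -
    have "shift ((shift ^^ k) x) \<in> Orb" for k
      unfolding Orb_def by (rule range_eqI[of _ _ "Suc k"]) simp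
    then have "shift ` Orb \<subseteq> Orb"
      by (auto simp: Orb_def)
    have "shift ` Y \<subseteq> shift_top closure_of (shift ` Orb)"
      unfolding Y_def by (rule continuous_map_image_closure_subset[OF continuous_map_shift])
    also have "\<dots> \<subseteq> Y"
      unfolding Y_def by (rule closure_of_mono) fact
    finally show ?thesis .
  qed
  ultimately have "Y = X"
    using assms(1) unfolding minimal_subshift_def by blast
  define U where "U = {u. \<forall>i\<in>F. u i = y i}"
  have "openin shift_top U"
    by (rule openin_shift_top_if_finite_window[OF assms(2)]) (auto simp: U_def)
  moreover have "y \<in> U \<inter> Y"
    using assms(4) \<open>Y = X\<close> by (simp add: U_def)
  ultimately have "U \<inter> Orb \<noteq> {}"
    using openin_Int_closure_of_eq_empty[of shift_top U Orb] by (auto simp: Y_def)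
  then obtain k where "(shift ^^ k) x \<in> U"
    by (auto simp: Orb_def)
  then show ?thesis
    by (intro that[of k]) (simp add: U_def)
qed

lemma finite_lang: "finite (lang X n :: 'a::finite list set)"
proof (rule finite_subset)
  show "lang X n \<subseteq> {xs. set xs \<subseteq> UNIV \<and> length xs = n}"
    by (auto simp: lang_def)
qed (rule finite_lists_length_eq, simp)

section \<open>Invariant measures on a subshift\<close>

lemma (in finite_measure) measure_pos_if_not_AE:
  assumes "{x \<in> space M. \<not> Q x} \<in> sets M" "\<not> (AE x in M. Q x)"
  shows "0 < measure M {x \<in> space M. \<not> Q x}"
proof -
  have "emeasure M {x \<in> space M. \<not> Q x} \<noteq> 0"
    using AE_iff_measurable[OF assms(1) refl] assms(2) by blast
  then show ?thesis
    by (simp add: emeasure_eq_measure zero_less_measure_iff)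
qed

lemma boshernitzan_cylinder_bound:
  fixes X :: "(int \<Rightarrow> 'a::finite) set"
  assumes "limsup (\<lambda>n. ereal (real n * Min ((\<lambda>u. measure \<nu> (cyl X u)) ` lang X n))) > 0"
  obtains \<delta> where "\<delta> > 0" "\<exists>\<^sub>F N in sequentially. \<forall>w\<in>lang X N. \<delta> \<le> real N * measure \<nu> (cyl X w)"
proof -
  define A where "A n = real n * Min ((\<lambda>u. measure \<nu> (cyl X u)) ` lang X n)" for n
  obtain \<delta> where \<delta>: "0 < ereal \<delta>" "ereal \<delta> < limsup (\<lambda>n. ereal (A n))"
    using ereal_dense2[OF assms[folded A_def]] by blast
  have "\<not> (\<forall>\<^sub>F N in sequentially. ereal (A N) \<le> ereal \<delta>)"
  proof
    assume "\<forall>\<^sub>F N in sequentially. ereal (A N) \<le> ereal \<delta>"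
    then have "limsup (\<lambda>n. ereal (A n)) \<le> ereal \<delta>"
      by (rule Limsup_bounded)
    then show False
      using \<delta>(2) by simp
  qed
  then have "\<exists>\<^sub>F N in sequentially. \<delta> < A N"
    by (simp add: not_eventually not_le)
  then have "\<exists>\<^sub>F N in sequentially. \<forall>w\<in>lang X N. \<delta> \<le> real N * measure \<nu> (cyl X w)"
  proof (rule frequently_elim1, intro ballI)
    fix N w assume "\<delta> < A N" "w \<in> lang X N"
    then have "A N \<le> real N * measure \<nu> (cyl X w)"
      unfolding A_def by (intro mult_left_mono Min_le finite_imageI finite_lang) auto
    then show "\<delta> \<le> real N * measure \<nu> (cyl X w)"
      using \<open>\<delta> < A N\<close> by linarith
  qed
  then show ?thesis
    using \<delta>(1) by (intro that[of \<delta>]) auto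
qed

locale invariant_subshift =
  fixes X :: "(int \<Rightarrow> 'a::finite) set" and \<mu> :: "(int \<Rightarrow> 'a) measure"
  assumes subshift: "subshift X" and invariant_prob: "invariant_prob X \<mu>"
begin

sublocale prob_space \<mu>
  using invariant_prob by (simp add: invariant_prob_def)

lemma space_eq [simp]: "space \<mu> = X"
  using invariant_prob by (simp add: invariant_prob_def)

lemma sets_eq: "sets \<mu> = sigma_sets X {U. openin (subtopology shift_top X) U}"
proof -
  have "{U. openin (subtopology shift_top X) U} \<subseteq> Pow X"
    using openin_subset by fastforce
  then show ?thesis
    using invariant_prob by (simp add: invariant_prob_def borel_X_def)
qed

lemma openin_in_sets: "openin (subtopology shift_top X) U \<Longrightarrow> U \<in> sets \<mu>"
  by (simp add: sets_eq)

lemma in_sets_if_depends_only_on: "finite F \<Longrightarrow> depends_only_on X F p \<Longrightarrow> {x \<in> X. p x} \<in> sets \<mu>"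
  by (intro openin_in_sets openin_subtopology_if_depends_only_on)

lemma borel_measurable_if_depends_only_on:
  assumes "finite F" "depends_only_on X F g"
  shows "g \<in> borel_measurable \<mu>"
proof (rule measurableI)
  fix A
  have "{x \<in> X. g x \<in> A} \<in> sets \<mu>"
    by (rule in_sets_if_depends_only_on[OF assms(1) depends_only_on_comp[OF assms(2)]])
  moreover have "g -` A \<inter> space \<mu> = {x \<in> X. g x \<in> A}"
    by auto
  ultimately show "g -` A \<inter> space \<mu> \<in> sets \<mu>"
    by simp
qed simp

lemma cyl_in_sets: "cyl X w \<in> sets \<mu>"
proof -
  have "{x \<in> X. \<forall>i<length w. x (int i) = w ! i} \<in> sets \<mu>"
  proof (rule in_sets_if_depends_only_on)
    show "depends_only_on X (int ` {..<length w}) (\<lambda>x. \<forall>i<length w. x (int i) = w ! i)"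
    proof (unfold depends_only_on_def, intro ballI impI)
      fix x y :: "int \<Rightarrow> 'a"
      assume "\<forall>i\<in>int ` {..<length w}. y i = x i"
      then have "y (int i) = x (int i)" if "i < length w" for i
        using that by blast
      then show "(\<forall>i<length w. y (int i) = w ! i) = (\<forall>i<length w. x (int i) = w ! i)"
        by simp
    qed
  qed simp
  then show ?thesis
    unfolding cyl_def .
qed

lemma local_set_in_sets:
  assumes "local_set X l C"
  shows "C \<in> sets \<mu>"
proof -
  have "C = {x \<in> X. x \<in> C}"
    using assms by (auto simp: local_set_def)
  also have "\<dots> \<in> sets \<mu>"
    using assms unfolding local_set_def by (intro in_sets_if_depends_only_on[of "{-int l..int l}"]) auto
  finally show ?thesis .
qed

lemma shift_measurable [measurable]: "shift \<in> \<mu> \<rightarrow>\<^sub>M \<mu>"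
proof (rule measurable_sigma_sets[OF sets_eq])
  show "{U. openin (subtopology shift_top X) U} \<subseteq> Pow X"
    using openin_subset by fastforce
  show "shift \<in> space \<mu> \<rightarrow> X"
    using subshift_shift_in[OF subshift] by simp
  have "continuous_map (subtopology shift_top X) (subtopology shift_top X) shift"
    using subshift_shift_in[OF subshift]
    by (intro continuous_map_into_subtopology continuous_map_from_subtopology continuous_map_shift) auto
  moreover have "shift -` U \<inter> space \<mu> = {x \<in> topspace (subtopology shift_top X). shift x \<in> U}" for U
    by auto
  ultimately show "shift -` U \<inter> space \<mu> \<in> sets \<mu>" if "U \<in> {U. openin (subtopology shift_top X) U}" for U
    using that by (intro openin_in_sets) (simp add: continuous_map_def)
qed

lemma distr_shift: "distr \<mu> \<mu> shift = \<mu>"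
  using invariant_prob by (intro measure_eqI) (simp_all add: emeasure_distr invariant_prob_def)

lemma funpow_shift_measurable [measurable]: "shift ^^ k \<in> \<mu> \<rightarrow>\<^sub>M \<mu>"
  by (rule measurable_compose_n) measurable

lemma distr_funpow_shift: "distr \<mu> \<mu> (shift ^^ k) = \<mu>"
proof (induction k)
  case (Suc k)
  have "distr \<mu> \<mu> (shift ^^ Suc k) = distr (distr \<mu> \<mu> (shift ^^ k)) \<mu> shift"
    by (simp add: distr_distr)
  then show ?case
    by (simp add: Suc.IH distr_shift o_def)
qed (simp add: distr_id2)

lemma AE_funpow_shift:
  assumes "AE x in \<mu>. Q x"
  shows "AE x in \<mu>. Q ((shift ^^ k) x)"
proof (rule AE_distrD[OF funpow_shift_measurable])
  show "AE x in distr \<mu> \<mu> (shift ^^ k). Q x"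
    unfolding distr_funpow_shift by (fact assms)
qed

lemma AE_funpow_shift_eigen:
  fixes R :: "(int \<Rightarrow> 'a) \<Rightarrow> complex"
  assumes "AE x in \<mu>. R (shift x) = z * R x"
  shows "AE x in \<mu>. R ((shift ^^ k) x) = z ^ k * R x"
proof (induction k)
  case (Suc k)
  with AE_funpow_shift[OF assms, of k] show ?case
    by eventually_elim (simp add: ac_simps)
qed simp

lemma integrable_indicator_funpow_shift:
  assumes "E \<in> sets \<mu>"
  shows "integrable \<mu> (\<lambda>x. indicator E ((shift ^^ k) x) :: real)"
proof -
  have "integrable (distr \<mu> \<mu> (shift ^^ k)) (indicator E :: _ \<Rightarrow> real)"
    unfolding distr_funpow_shift by (rule integrable_real_indicator[OF assms]) (simp add: less_top[symmetric])
  then show ?thesis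
    using assms by (simp add: integrable_distr_eq)
qed

lemma integral_indicator_funpow_shift:
  assumes [measurable]: "E \<in> sets \<mu>"
  shows "(\<integral>x. indicator E ((shift ^^ k) x) \<partial>\<mu>) = measure \<mu> E"
proof -
  have "(\<integral>x. indicator E ((shift ^^ k) x) \<partial>\<mu>) = (\<integral>x. (indicator E x :: real) \<partial>distr \<mu> \<mu> (shift ^^ k))"
    by (rule integral_distr[OF funpow_shift_measurable, symmetric]) measurable
  also have "\<dots> = measure \<mu> E"
    unfolding distr_funpow_shift using sets.sets_into_space[OF assms] by (simp add: Int_absorb2)
  finally show ?thesis .
qed

section \<open>Approximation by local sets\<close>

definition locally_approximable :: "(int \<Rightarrow> 'a) set \<Rightarrow> bool" where
  "locally_approximable E \<longleftrightarrow> (\<forall>e>0. \<exists>l C. local_set X l C \<and> measure \<mu> (sym_diff E C) < e)"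

lemma locally_approximable_local_set: "local_set X l C \<Longrightarrow> locally_approximable C"
  unfolding locally_approximable_def by (intro allI impI exI[of _ l] exI[of _ C]) simp

lemma locally_approximable_Diff:
  assumes "E \<subseteq> X" "locally_approximable E"
  shows "locally_approximable (X - E)"
  unfolding locally_approximable_def
proof (intro allI impI)
  fix e :: real assume "e > 0"
  then obtain l C where C: "local_set X l C" "measure \<mu> (sym_diff E C) < e"
    using assms(2) unfolding locally_approximable_def by blast
  have "sym_diff (X - E) (X - C) = sym_diff E C"
    using assms(1) C(1) by (auto simp: local_set_def)
  then show "\<exists>l C. local_set X l C \<and> measure \<mu> (sym_diff (X - E) C) < e"
    using C local_set_Diff by metis
qed

lemma locally_approximable_Un:
  assumes "E \<in> sets \<mu>" "E' \<in> sets \<mu>" "locally_approximable E" "locally_approximable E'"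
  shows "locally_approximable (E \<union> E')"
  unfolding locally_approximable_def
proof (intro allI impI)
  fix e :: real assume "e > 0"
  then obtain l C l' C' where
      C: "local_set X l C" "measure \<mu> (sym_diff E C) < e / 2" and
      C': "local_set X l' C'" "measure \<mu> (sym_diff E' C') < e / 2"
    using assms(3,4) unfolding locally_approximable_def by (meson half_gt_zero)
  have sets: "C \<in> sets \<mu>" "C' \<in> sets \<mu>"
    using C(1) C'(1) by (simp_all add: local_set_in_sets)
  have "local_set X (max l l') (C \<union> C')"
    using C(1) C'(1) by (intro local_set_Un) (auto elim: local_set_mono)
  moreover have "measure \<mu> (sym_diff (E \<union> E') (C \<union> C')) \<le> measure \<mu> (sym_diff E C \<union> sym_diff E' C')"
    using assms(1,2) sets by (intro finite_measure_mono) auto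
  moreover have "measure \<mu> (sym_diff E C \<union> sym_diff E' C') \<le> measure \<mu> (sym_diff E C) + measure \<mu> (sym_diff E' C')"
    using assms(1,2) sets by (intro measure_Un_le) auto
  ultimately show "\<exists>l C. local_set X l C \<and> measure \<mu> (sym_diff (E \<union> E') C) < e"
    using C(2) C'(2) by (intro exI conjI) auto
qed

lemma locally_approximable_incseq_UN:
  assumes "range A \<subseteq> sets \<mu>" "incseq A" "\<And>i. locally_approximable (A i)"
  shows "locally_approximable (\<Union>i. A i)"
  unfolding locally_approximable_def
proof (intro allI impI)
  fix e :: real assume "e > 0"
  have "(\<lambda>i. measure \<mu> (A i)) \<longlonglongrightarrow> measure \<mu> (\<Union>i. A i)"
    using assms(1,2) by (rule finite_Lim_measure_incseq)
  then obtain i where "\<forall>n\<ge>i. norm (measure \<mu> (A n) - measure \<mu> (\<Union>i. A i)) < e / 2"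
    using \<open>e > 0\<close> LIMSEQ_D half_gt_zero by blast
  then have "\<bar>measure \<mu> (A i) - measure \<mu> (\<Union>i. A i)\<bar> < e / 2"
    by (metis order_refl real_norm_def)
  then have i: "measure \<mu> (\<Union>i. A i) - measure \<mu> (A i) < e / 2"
    by linarith
  obtain l C where C: "local_set X l C" "measure \<mu> (sym_diff (A i) C) < e / 2"
    using assms(3) \<open>e > 0\<close> unfolding locally_approximable_def by (meson half_gt_zero)
  have sets: "A i \<in> sets \<mu>" "(\<Union>i. A i) \<in> sets \<mu>" "C \<in> sets \<mu>"
    using assms(1) C(1) local_set_in_sets by auto
  have "measure \<mu> (sym_diff (\<Union>i. A i) C) \<le> measure \<mu> (((\<Union>i. A i) - A i) \<union> sym_diff (A i) C)"
    using sets by (intro finite_measure_mono) auto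
  also have "\<dots> \<le> measure \<mu> ((\<Union>i. A i) - A i) + measure \<mu> (sym_diff (A i) C)"
    using sets by (intro measure_Un_le) auto
  also have "measure \<mu> ((\<Union>i. A i) - A i) = measure \<mu> (\<Union>i. A i) - measure \<mu> (A i)"
    using sets by (intro finite_measure_Diff) auto
  finally have "measure \<mu> (sym_diff (\<Union>i. A i) C) < e"
    using C(2) i by simp
  then show "\<exists>l C. local_set X l C \<and> measure \<mu> (sym_diff (\<Union>i. A i) C) < e"
    using C(1) by blast
qed

lemma locally_approximable_openin:
  assumes "openin (subtopology shift_top X) U"
  shows "locally_approximable U"
proof -
  define W where "W l = {x \<in> X. \<forall>y\<in>X. (\<forall>i\<in>{-int l..int l}. y i = x i) \<longrightarrow> y \<in> U}" for l
  have local_W: "local_set X l (W l)" for l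
    unfolding local_set_def depends_only_on_def W_def by auto
  have "incseq W"
    unfolding incseq_def W_def by force
  have "U \<subseteq> (\<Union>l. W l)"
  proof
    fix x assume "x \<in> U"
    obtain T where T: "openin shift_top T" "U = T \<inter> X"
      using assms by (auto simp: openin_subtopology)
    then obtain l where "\<And>y. \<forall>i\<in>{-int l..int l}. y i = x i \<Longrightarrow> y \<in> T"
      using \<open>x \<in> U\<close> openin_shift_top_window_nhd by blast
    then have "x \<in> W l"
      using \<open>x \<in> U\<close> T(2) by (auto simp: W_def)
    then show "x \<in> (\<Union>l. W l)"
      by blast
  qed
  moreover have "W l \<subseteq> U" for l
    by (auto simp: W_def)
  ultimately have "U = (\<Union>l. W l)"
    by blast
  moreover have "locally_approximable (\<Union>l. W l)"
    using \<open>incseq W\<close> local_set_in_sets[OF local_W] locally_approximable_local_set[OF local_W]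
    by (intro locally_approximable_incseq_UN) auto
  ultimately show ?thesis
    by simp
qed

lemma locally_approximable_finite_UN:
  fixes A :: "nat \<Rightarrow> (int \<Rightarrow> 'a) set"
  assumes "\<And>i. A i \<in> sets \<mu>" "\<And>i. locally_approximable (A i)"
  shows "locally_approximable (\<Union>i<n. A i)"
proof (induction n)
  case 0
  show ?case
    by (simp add: locally_approximable_local_set[OF local_set_empty])
next
  case (Suc n)
  have "(\<Union>i<Suc n. A i) = A n \<union> (\<Union>i<n. A i)"
    by (auto simp: lessThan_Suc)
  then show ?case
    using Suc.IH assms by (auto intro: locally_approximable_Un)
qed

lemma locally_approximable_sets:
  assumes "E \<in> sets \<mu>"
  shows "locally_approximable E"
proof -
  have "E \<in> sigma_sets X {U. openin (subtopology shift_top X) U}"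
    using assms by (simp add: sets_eq)
  then show ?thesis
  proof (induction rule: sigma_sets.induct)
    case (Basic U)
    then show ?case
      by (simp add: locally_approximable_openin)
  next
    case Empty
    show ?case
      by (rule locally_approximable_local_set[OF local_set_empty])
  next
    case (Compl E)
    then have "E \<in> sets \<mu>"
      by (simp add: sets_eq)
    then have "E \<subseteq> X"
      using sets.sets_into_space by fastforce
    then show ?case
      using Compl(2) by (rule locally_approximable_Diff)
  next
    case (Union A)
    have sets_A: "A i \<in> sets \<mu>" for i
      using Union(1) by (simp add: sets_eq)
    have "locally_approximable (\<Union>n. \<Union>i<n. A i)"
    proof (rule locally_approximable_incseq_UN)
      show "range (\<lambda>n. \<Union>i<n. A i) \<subseteq> sets \<mu>"
        using sets_A by auto
      show "incseq (\<lambda>n. \<Union>i<n. A i)"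
        by (force simp: incseq_def)
      show "locally_approximable (\<Union>i<n. A i)" for n
        by (rule locally_approximable_finite_UN[OF sets_A Union(2)])
    qed
    moreover have "(\<Union>n. \<Union>i<n. A i) = (\<Union>i. A i)"
      by blast
    ultimately show ?case
      by simp
  qed
qed

lemma measure_select_ne_le:
  assumes "finite (range R)" "\<And>c. {x \<in> X. R x = c} \<in> sets \<mu>" "\<And>c. C c \<in> sets \<mu>"
  shows "measure \<mu> {x \<in> X. (SOME c. c \<in> range R \<and> x \<in> C c) \<noteq> R x} \<le>
    (\<Sum>c\<in>range R. measure \<mu> (sym_diff {x \<in> X. R x = c} (C c)))"
proof -
  define P where "P x = (SOME c. c \<in> range R \<and> x \<in> C c)" for x
  define D where "D c = sym_diff {x \<in> X. R x = c} (C c)" for c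
  have sets_D: "D c \<in> sets \<mu>" for c
    unfolding D_def by (intro sets.Un sets.Diff assms(2,3))
  have "{x \<in> X. P x \<noteq> R x} \<subseteq> (\<Union>c\<in>range R. D c)"
  proof
    fix x assume x: "x \<in> {x \<in> X. P x \<noteq> R x}"
    show "x \<in> (\<Union>c\<in>range R. D c)"
    proof (cases "x \<in> C (R x)")
      case True
      then have P_x: "P x \<in> range R \<and> x \<in> C (P x)"
        using someI_ex[of "\<lambda>c. c \<in> range R \<and> x \<in> C c"] unfolding P_def by blast
      then have "x \<in> D (P x)"
        using x by (simp add: D_def eq_commute[of "R x"])
      then show ?thesis
        using P_x by blast
    next
      case False
      then have "x \<in> D (R x)"
        using x by (simp add: D_def)
      then show ?thesis
        by blast
    qed
  qed
  then have "measure \<mu> {x \<in> X. P x \<noteq> R x} \<le> measure \<mu> (\<Union>c\<in>range R. D c)"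
    by (rule finite_measure_mono[OF _ sets.finite_UN[OF assms(1) sets_D]])
  also have "\<dots> \<le> (\<Sum>c\<in>range R. measure \<mu> (D c))"
    by (rule measure_UNION_le[OF assms(1) sets_D])
  finally show ?thesis
    by (simp add: P_def D_def)
qed

lemma exists_local_approximation:
  assumes "finite (range R)" "\<And>c. {x \<in> X. R x = c} \<in> sets \<mu>" "e > 0"
  obtains l P where "depends_only_on X {-int l..int l} P" "measure \<mu> {x \<in> X. P x \<noteq> R x} < e"
proof -
  define e' where "e' = e / (card (range R) + 1)"
  have "e' > 0"
    using assms(3) by (simp add: e'_def)
  have "\<exists>l C. local_set X l C \<and> measure \<mu> (sym_diff {x \<in> X. R x = c} C) < e'" for c
    using locally_approximable_sets[OF assms(2)] \<open>e' > 0\<close> unfolding locally_approximable_def by blast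
  then have "\<exists>L C. \<forall>c. local_set X (L c) (C c) \<and> measure \<mu> (sym_diff {x \<in> X. R x = c} (C c)) < e'"
    by (subst choice_iff[symmetric])+ blast
  then obtain L C where
      LC: "\<And>c. local_set X (L c) (C c)" "\<And>c. measure \<mu> (sym_diff {x \<in> X. R x = c} (C c)) < e'"
    by blast
  define l where "l = Max (L ` range R)"
  have "local_set X l (C c)" if "c \<in> range R" for c
  proof (rule local_set_mono[OF LC(1)])
    show "L c \<le> l"
      unfolding l_def using assms(1) that by (intro Max_ge) auto
  qed
  then have "depends_only_on X {-int l..int l} (\<lambda>x. SOME c. c \<in> range R \<and> x \<in> C c)"
    by (rule depends_only_on_select_local_set)
  moreover have "measure \<mu> {x \<in> X. (SOME c. c \<in> range R \<and> x \<in> C c) \<noteq> R x} < e"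
  proof -
    have "measure \<mu> {x \<in> X. (SOME c. c \<in> range R \<and> x \<in> C c) \<noteq> R x} \<le>
        (\<Sum>c\<in>range R. measure \<mu> (sym_diff {x \<in> X. R x = c} (C c)))"
      by (rule measure_select_ne_le[OF assms(1,2) local_set_in_sets[OF LC(1)]])
    also have "\<dots> \<le> (\<Sum>c\<in>range R. e')"
      using LC(2) by (intro sum_mono) (simp add: less_imp_le)
    also have "\<dots> < e"
      using assms(3) by (simp add: e'_def field_simps)
    finally show ?thesis .
  qed
  ultimately show ?thesis
    by (rule that)
qed

end

section \<open>Majority votes along orbits\<close>

text \<open>
  Only the times \<open>l \<le> k < l + n\<close> vote, so that for \<open>P\<close> depending on \<open>[-l, l]\<close> all votes
  are read off the coordinates \<open>[0, n + 2 l)\<close>, i.e. off a cylinder at position \<open>0\<close>.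
\<close>

definition votes :: "((int \<Rightarrow> 'a) \<Rightarrow> complex) \<Rightarrow> complex \<Rightarrow> nat \<Rightarrow> nat \<Rightarrow> complex \<Rightarrow> (int \<Rightarrow> 'a) \<Rightarrow> nat" where
  "votes P z l n c x = (\<Sum>k\<in>{l..<l+n}. of_bool (P ((shift ^^ k) x) = z ^ k * c))"

definition max_votes :: "((int \<Rightarrow> 'a) \<Rightarrow> complex) \<Rightarrow> complex \<Rightarrow> nat \<Rightarrow> nat \<Rightarrow> (int \<Rightarrow> 'a) \<Rightarrow> nat" where
  "max_votes P z l n x = Max (range (\<lambda>c. votes P z l n c x))"

definition majority :: "((int \<Rightarrow> 'a) \<Rightarrow> complex) \<Rightarrow> complex \<Rightarrow> nat \<Rightarrow> nat \<Rightarrow> (int \<Rightarrow> 'a) \<Rightarrow> complex" where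
  "majority P z l n x = (THE c. n < 2 * votes P z l n c x)"

lemma votes_le: "votes P z l n c x \<le> n"
  unfolding votes_def by (rule order_trans[OF sum_bounded_above[where K = 1]]) auto

lemma votes_shift:
  "votes P z l n (z * c) (shift x) + of_bool (P ((shift ^^ l) x) = z ^ l * c) =
   votes P z l n c x + of_bool (P ((shift ^^ (l + n)) x) = z ^ (l + n) * c)"
proof -
  define v where "v k = (of_bool (P ((shift ^^ k) x) = z ^ k * c) :: nat)" for k
  have "votes P z l n (z * c) (shift x) = (\<Sum>k\<in>{l..<l+n}. v (Suc k))"
    unfolding votes_def v_def by (simp add: funpow_swap1 ac_simps)
  also have "\<dots> = (\<Sum>k\<in>{Suc l..<Suc (l+n)}. v k)"
    by (rule sum.shift_bounds_Suc_ivl[symmetric])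
  finally have "votes P z l n (z * c) (shift x) + v l = (\<Sum>k\<in>{l..<Suc (l+n)}. v k)"
    by (simp add: sum.atLeast_Suc_lessThan)
  also have "\<dots> = votes P z l n c x + v (l + n)"
    by (simp add: votes_def v_def)
  finally show ?thesis
    by (simp add: v_def)
qed

lemma votes_shift_le: "votes P z l n (z * c) (shift x) \<le> votes P z l n c x + 1"
  using votes_shift[of P z l n c x] by (simp add: of_bool_def split: if_splits)

lemma votes_le_votes_shift: "votes P z l n c x \<le> votes P z l n (z * c) (shift x) + 1"
  using votes_shift[of P z l n c x] by (simp add: of_bool_def split: if_splits)

lemma votes_add_votes_le:
  assumes "z \<noteq> 0" "c \<noteq> c'"
  shows "votes P z l n c x + votes P z l n c' x \<le> n"
  unfolding votes_def sum.distrib[symmetric]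
  by (rule order_trans[OF sum_bounded_above[where K = 1]]) (use assms in auto)

lemma finite_range_votes: "finite (range (\<lambda>c. votes P z l n c x))"
  by (rule finite_subset[of _ "{..n}"]) (auto simp: votes_le)

lemma votes_le_max_votes: "votes P z l n c x \<le> max_votes P z l n x"
  unfolding max_votes_def by (rule Max_ge[OF finite_range_votes]) simp

lemma max_votes_attained:
  obtains c where "votes P z l n c x = max_votes P z l n x"
proof -
  have "max_votes P z l n x \<in> range (\<lambda>c. votes P z l n c x)"
    unfolding max_votes_def by (rule Max_in[OF finite_range_votes]) simp
  then obtain c where "max_votes P z l n x = votes P z l n c x"
    by blast
  then show ?thesis
    by (intro that) simp
qed

lemma max_votes_shift_le:
  assumes "z \<noteq> 0"
  shows "max_votes P z l n (shift x) \<le> max_votes P z l n x + 1"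
proof -
  obtain c where c: "votes P z l n c (shift x) = max_votes P z l n (shift x)"
    by (rule max_votes_attained)
  have "votes P z l n (z * (c / z)) (shift x) \<le> votes P z l n (c / z) x + 1"
    by (rule votes_shift_le)
  then show ?thesis
    using c assms votes_le_max_votes[of P z l n "c / z" x] by simp
qed

lemma majority_eqI:
  assumes "z \<noteq> 0" "n < 2 * votes P z l n c x"
  shows "majority P z l n x = c"
  unfolding majority_def
proof (rule the_equality)
  show "c' = c" if "n < 2 * votes P z l n c' x" for c'
  proof (rule ccontr)
    assume "c' \<noteq> c"
    then have "votes P z l n c' x + votes P z l n c x \<le> n"
      by (rule votes_add_votes_le[OF assms(1)])
    then show False
      using assms(2) that by linarith
  qed
qed (fact assms(2))

lemma majority_shift:
  assumes "z \<noteq> 0" "n + 2 < 2 * votes P z l n c x"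
  shows "majority P z l n (shift x) = z * majority P z l n x"
proof -
  have "majority P z l n x = c"
    using assms by (intro majority_eqI) auto
  moreover have "majority P z l n (shift x) = z * c"
    using assms votes_le_votes_shift[of P z l n c x] by (intro majority_eqI) auto
  ultimately show ?thesis
    by simp
qed

lemma depends_only_on_votes:
  assumes "subshift X" "depends_only_on X {-int l..int l} P"
  shows "depends_only_on X {0..<int (n + 2 * l)} (\<lambda>x c. votes P z l n c x)"
proof (unfold depends_only_on_def, intro ballI impI)
  fix x y assume xy: "x \<in> X" "y \<in> X" and agree: "\<forall>i\<in>{0..<int (n + 2 * l)}. y i = x i"
  have "P ((shift ^^ k) y) = P ((shift ^^ k) x)" if "k \<in> {l..<l+n}" for k
  proof (rule depends_only_onD[OF assms(2)])
    show "(shift ^^ k) x \<in> X" "(shift ^^ k) y \<in> X"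
      using xy assms(1) by (simp_all add: subshift_funpow_shift_in)
    show "(shift ^^ k) y i = (shift ^^ k) x i" if "i \<in> {-int l..int l}" for i
      using agree that \<open>k \<in> {l..<l+n}\<close> by (simp add: funpow_shift_apply)
  qed
  then show "(\<lambda>c. votes P z l n c y) = (\<lambda>c. votes P z l n c x)"
    unfolding votes_def by (intro ext sum.cong) simp_all
qed

lemma topological_eigenvalue_if_majority_margin:
  assumes "subshift X" "z \<noteq> 0" and P: "depends_only_on X {-int l..int l} P"
    and margin: "\<And>x. x \<in> X \<Longrightarrow> n div 2 + 2 \<le> max_votes P z l n x"
    and y: "y \<in> X" "n < 2 * votes P z l n c y" "c \<noteq> 0"
  shows "topological_eigenvalue X z"
  unfolding topological_eigenvalue_def
proof (intro exI conjI)
  show "continuous_map (subtopology shift_top X) euclidean (majority P z l n)"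
    unfolding majority_def
    by (rule continuous_map_if_depends_only_on[OF _ depends_only_on_comp[OF depends_only_on_votes[OF assms(1) P]]]) simp
  show "\<exists>x\<in>X. majority P z l n x \<noteq> 0"
    using y majority_eqI[OF assms(2) y(2)] by blast
  show "\<forall>x\<in>X. majority P z l n (shift x) = z * majority P z l n x"
  proof
    fix x assume "x \<in> X"
    obtain c' where "votes P z l n c' x = max_votes P z l n x"
      by (rule max_votes_attained)
    then have "n + 2 < 2 * votes P z l n c' x"
      using margin[OF \<open>x \<in> X\<close>] by linarith
    then show "majority P z l n (shift x) = z * majority P z l n x"
      by (rule majority_shift[OF assms(2)])
  qed
qed

lemma votes_eigen_eq:
  assumes "subshift X" "x \<in> X" and eigen: "\<And>k. k \<in> {l..<l+n} \<Longrightarrow> R ((shift ^^ k) x) = z ^ k * R x"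
  shows "real (votes P z l n (R x) x) = real n - (\<Sum>k\<in>{l..<l+n}. indicator {u \<in> X. P u \<noteq> R u} ((shift ^^ k) x))"
proof -
  have vote_k: "real (of_bool (P ((shift ^^ k) x) = z ^ k * R x)) = 1 - indicator {u \<in> X. P u \<noteq> R u} ((shift ^^ k) x)"
    if "k \<in> {l..<l+n}" for k
    using eigen[OF that] subshift_funpow_shift_in[OF assms(1,2), of k] by (simp add: indicator_def)
  have "real (votes P z l n (R x) x) = (\<Sum>k\<in>{l..<l+n}. real (of_bool (P ((shift ^^ k) x) = z ^ k * R x)))"
    unfolding votes_def by (rule of_nat_sum)
  also have "\<dots> = (\<Sum>k\<in>{l..<l+n}. 1 - indicator {u \<in> X. P u \<noteq> R u} ((shift ^^ k) x))"
    by (rule sum.cong[OF refl vote_k])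
  also have "\<dots> = real n - (\<Sum>k\<in>{l..<l+n}. indicator {u \<in> X. P u \<noteq> R u} ((shift ^^ k) x))"
    by (simp add: sum_subtractf)
  finally show ?thesis .
qed

lemma nat_intermed_val_Suc_le:
  fixes g :: "nat \<Rightarrow> nat"
  assumes step: "\<And>j. g (Suc j) \<le> g j + 1" and "g 0 \<le> v" "v \<le> g k"
  shows "\<exists>j\<le>k. g j = v"
  using assms(3)
proof (induction k)
  case 0
  then show ?case
    using assms(2) by auto
next
  case (Suc k)
  show ?case
  proof (cases "v \<le> g k")
    case True
    then show ?thesis
      using Suc.IH le_Suc_eq by blast
  next
    case False
    then have "g (Suc k) = v"
      using Suc.prems step[of k] by linarith
    then show ?thesis
      by blast
  qed
qed

lemma card_middle_levels_bound:
  fixes \<delta> :: real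
  assumes "2 * l + 40 \<le> n" "\<delta> \<ge> 0"
  shows "\<delta> / 10 \<le> real (card {n div 2 + 2..3 * n div 4}) * (\<delta> / real (n + 2 * l))"
proof -
  have "card {n div 2 + 2..3 * n div 4} = Suc (3 * n div 4) - (n div 2 + 2)"
    by simp
  then have "n + 2 * l \<le> 10 * card {n div 2 + 2..3 * n div 4}"
    using assms(1) by linarith
  then have "real (n + 2 * l) \<le> real (10 * card {n div 2 + 2..3 * n div 4})"
    by (simp only: of_nat_le_iff)
  then have "real (n + 2 * l) / 10 \<le> real (card {n div 2 + 2..3 * n div 4})"
    by simp
  then have "\<delta> / real (n + 2 * l) * (real (n + 2 * l) / 10) \<le>
      \<delta> / real (n + 2 * l) * real (card {n div 2 + 2..3 * n div 4})"
    using assms(2) by (intro mult_left_mono) auto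
  moreover have "\<delta> / real (n + 2 * l) * (real (n + 2 * l) / 10) = \<delta> / 10"
    using assms(1) by simp
  ultimately show ?thesis
    by (simp add: mult.commute)
qed

context invariant_subshift
begin

lemma card_mult_le_measure_levels:
  assumes g_local: "depends_only_on X {0..<int N} g"
    and cyl_bound: "\<And>w. w \<in> lang X N \<Longrightarrow> \<eta> \<le> measure \<mu> (cyl X w)"
    and "finite V" and attained: "\<And>v. v \<in> V \<Longrightarrow> \<exists>u\<in>X. g u = v"
  shows "real (card V) * \<eta> \<le> measure \<mu> {x \<in> X. g x \<in> V}"
proof -
  obtain U where U: "\<And>v. v \<in> V \<Longrightarrow> U v \<in> X \<and> g (U v) = v"
    using bchoice[of V "\<lambda>v u. u \<in> X \<and> g u = v"] attained by blast
  define W where "W v = cyl X (map (\<lambda>i. U v (int i)) [0..<N])" for v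
  have g_W: "u \<in> X \<and> g u = v" if "v \<in> V" "u \<in> W v" for u v
  proof -
    have "u \<in> X" and agree: "\<forall>i<N. u (int i) = U v (int i)"
      using that(2) by (simp_all add: W_def cyl_def)
    have "u i = U v i" if "i \<in> {0..<int N}" for i
      using agree[rule_format, of "nat i"] that by (simp add: nat_less_iff)
    then have "g u = g (U v)"
      using U[OF that(1)] \<open>u \<in> X\<close> by (intro depends_only_onD[OF g_local]) auto
    then show ?thesis
      using U[OF that(1)] \<open>u \<in> X\<close> by simp
  qed
  have "real (card V) * \<eta> \<le> (\<Sum>v\<in>V. measure \<mu> (W v))"
  proof -
    have "map (\<lambda>i. U v (int i)) [0..<N] \<in> lang X N" if "v \<in> V" for v
      unfolding lang_def using U[OF that] by auto
    then show ?thesis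
      using sum_mono[of V "\<lambda>_. \<eta>"] cyl_bound by (simp add: W_def)
  qed
  also have "\<dots> = measure \<mu> (\<Union>v\<in>V. W v)"
  proof (rule finite_measure_finite_Union[symmetric])
    show "disjoint_family_on W V"
      unfolding disjoint_family_on_def using g_W by blast
  qed (auto simp: \<open>finite V\<close> W_def cyl_in_sets)
  also have "\<dots> \<le> measure \<mu> {x \<in> X. g x \<in> V}"
  proof (rule finite_measure_mono)
    show "(\<Union>v\<in>V. W v) \<subseteq> {x \<in> X. g x \<in> V}"
      using g_W by fastforce
    show "{x \<in> X. g x \<in> V} \<in> sets \<mu>"
      by (rule in_sets_if_depends_only_on[OF _ depends_only_on_comp[OF g_local]]) simp
  qed
  finally show ?thesis .
qed

lemma lower_bound_if_level_set_small:
  fixes g :: "(int \<Rightarrow> 'a) \<Rightarrow> nat"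
  assumes minimal: "minimal_subshift X"
    and g_local: "depends_only_on X {0..<int N} g"
    and g_step: "\<And>x. x \<in> X \<Longrightarrow> g (shift x) \<le> g x + 1"
    and cyl_bound: "\<And>w. w \<in> lang X N \<Longrightarrow> \<eta> \<le> measure \<mu> (cyl X w)"
    and small: "measure \<mu> {x \<in> X. g x \<in> {a..b}} < real (card {a..b}) * \<eta>"
    and y: "y \<in> X" "b \<le> g y"
    and x: "x \<in> X"
  shows "a \<le> g x"
proof (rule ccontr)
  assume "\<not> a \<le> g x"
  obtain k where "\<forall>i\<in>{0..<int N}. (shift ^^ k) x i = y i"
    using minimal_subshift_orbit_meets_window[OF minimal _ x y(1)] by blast
  then have "g ((shift ^^ k) x) = g y"
    using depends_only_onD[OF g_local y(1) subshift_funpow_shift_in[OF subshift x]] by simp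
  then have "\<exists>j. g ((shift ^^ j) x) = v" if "v \<in> {a..b}" for v
    using nat_intermed_val_Suc_le[of "\<lambda>j. g ((shift ^^ j) x)" v k] that y(2) \<open>\<not> a \<le> g x\<close>
      g_step[OF subshift_funpow_shift_in[OF subshift x]] by auto
  then have "\<exists>u\<in>X. g u = v" if "v \<in> {a..b}" for v
    using that subshift_funpow_shift_in[OF subshift x] by blast
  then have "real (card {a..b}) * \<eta> \<le> measure \<mu> {x \<in> X. g x \<in> {a..b}}"
    by (intro card_mult_le_measure_levels[OF g_local cyl_bound]) auto
  then show False
    using small by linarith
qed

lemma measure_few_correct_votes_le:
  fixes R P :: "(int \<Rightarrow> 'a) \<Rightarrow> complex"
  assumes [measurable]: "R \<in> borel_measurable \<mu>" "P \<in> borel_measurable \<mu>"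
    and eigen: "AE x in \<mu>. R (shift x) = z * R x" and "n > 0"
  shows "measure \<mu> {x \<in> X. 4 * votes P z l n (R x) x \<le> 3 * n} \<le> 4 * measure \<mu> {x \<in> X. P x \<noteq> R x}"
proof -
  define E where "E = {x \<in> X. P x \<noteq> R x}"
  have "{x \<in> space \<mu>. P x = R x} \<in> sets \<mu>"
    by (rule measurable_equality_set) (fact assms)+
  moreover have "E = space \<mu> - {x \<in> space \<mu>. P x = R x}"
    by (auto simp: E_def)
  ultimately have E_sets: "E \<in> sets \<mu>"
    by (metis sets.compl_sets)
  define f where "f x = (\<Sum>k\<in>{l..<l+n}. indicator E ((shift ^^ k) x) :: real)" for x
  have integrable_f: "integrable \<mu> f"
    unfolding f_def using integrable_indicator_funpow_shift[OF E_sets] by auto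
  have "AE x in \<mu>. \<forall>k\<in>{l..<l+n}. R ((shift ^^ k) x) = z ^ k * R x"
    using AE_funpow_shift_eigen[OF eigen] by (intro AE_finite_allI) auto
  then have "AE x in \<mu>. x \<in> {x \<in> X. 4 * votes P z l n (R x) x \<le> 3 * n} \<longrightarrow> x \<in> {x \<in> space \<mu>. real n / 4 \<le> f x}"
    using AE_space
  proof eventually_elim
    case (elim x)
    then have "real (votes P z l n (R x) x) = real n - f x"
      unfolding f_def E_def by (intro votes_eigen_eq[OF subshift]) auto
    then show ?case
      using elim(2) by auto
  qed
  then have "measure \<mu> {x \<in> X. 4 * votes P z l n (R x) x \<le> 3 * n} \<le> measure \<mu> {x \<in> space \<mu>. real n / 4 \<le> f x}"
  proof (rule finite_measure_mono_AE)
    have [measurable]: "f \<in> borel_measurable \<mu>"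
      using integrable_f by (rule borel_measurable_integrable)
    show "{x \<in> space \<mu>. real n / 4 \<le> f x} \<in> sets \<mu>"
      by measurable
  qed
  also have "\<dots> \<le> (\<integral>x. f x \<partial>\<mu>) / (real n / 4)"
    using \<open>n > 0\<close> by (intro integral_Markov_inequality_measure[OF integrable_f sets.top]) (auto simp: f_def sum_nonneg)
  also have "(\<integral>x. f x \<partial>\<mu>) = n * measure \<mu> E"
    unfolding f_def using integrable_indicator_funpow_shift[OF E_sets]
    by (simp add: Bochner_Integration.integral_sum integral_indicator_funpow_shift[OF E_sets])
  finally show ?thesis
    using \<open>n > 0\<close> by (simp add: E_def)
qed

lemma votes_level_in_sets:
  fixes P R :: "(int \<Rightarrow> 'a) \<Rightarrow> complex"
  assumes [measurable]: "P \<in> borel_measurable \<mu>" "R \<in> borel_measurable \<mu>"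
  shows "{x \<in> X. p (votes P z l n (R x) x)} \<in> sets \<mu>"
proof -
  have [measurable]: "Measurable.pred \<mu> (\<lambda>x. P ((shift ^^ k) x) = z ^ k * R x)" for k
    unfolding pred_def by (rule measurable_equality_set) measurable
  have "(\<lambda>x. votes P z l n (R x) x) \<in> \<mu> \<rightarrow>\<^sub>M count_space UNIV"
    unfolding votes_def by measurable
  from measurable_sets[OF this, of "{v. p v}"] show ?thesis
    by (simp add: vimage_def Int_def conj_commute)
qed

lemma clear_majority_everywhere:
  fixes R :: "(int \<Rightarrow> 'a) \<Rightarrow> complex"
  assumes minimal: "minimal_subshift X" and "z \<noteq> 0"
    and P_local: "depends_only_on X {-int l..int l} P" and R_meas: "R \<in> borel_measurable \<mu>"
    and n: "2 * l + 40 \<le> n"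
    and cyl_bound: "\<forall>w\<in>lang X (n + 2 * l). \<delta> \<le> real (n + 2 * l) * measure \<mu> (cyl X w)"
    and few_weak: "measure \<mu> {x \<in> X. 4 * votes P z l n (R x) x \<le> 3 * n} < \<delta> / 10"
    and y: "y \<in> X" "3 * n < 4 * votes P z l n (R y) y"
    and x: "x \<in> X"
  shows "n div 2 + 2 \<le> max_votes P z l n x"
proof (rule lower_bound_if_level_set_small[OF minimal _ _ _ _ y(1) _ x])
  define N where "N = n + 2 * l"
  show "depends_only_on X {0..<int N} (max_votes P z l n)"
    unfolding max_votes_def N_def by (rule depends_only_on_comp[OF depends_only_on_votes[OF subshift P_local]])
  show "max_votes P z l n (shift u) \<le> max_votes P z l n u + 1" for u
    by (rule max_votes_shift_le[OF \<open>z \<noteq> 0\<close>])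
  show "\<delta> / N \<le> measure \<mu> (cyl X w)" if "w \<in> lang X N" for w
    using cyl_bound that n by (simp add: N_def pos_divide_le_eq mult.commute)
  show "3 * n div 4 \<le> max_votes P z l n y"
    using y(2) votes_le_max_votes[of P z l n "R y" y] by linarith
  let ?weak = "{x \<in> X. 4 * votes P z l n (R x) x \<le> 3 * n}"
  have "{u \<in> X. max_votes P z l n u \<in> {n div 2 + 2..3 * n div 4}} \<subseteq> ?weak"
  proof (intro subsetI CollectI conjI)
    fix u assume "u \<in> {u \<in> X. max_votes P z l n u \<in> {n div 2 + 2..3 * n div 4}}"
    then show "u \<in> X" "4 * votes P z l n (R u) u \<le> 3 * n"
      using votes_le_max_votes[of P z l n "R u" u] by auto
  qed
  moreover have "?weak \<in> sets \<mu>"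
    by (rule votes_level_in_sets[OF borel_measurable_if_depends_only_on[OF _ P_local] R_meas]) simp
  ultimately have "measure \<mu> {u \<in> X. max_votes P z l n u \<in> {n div 2 + 2..3 * n div 4}} \<le> measure \<mu> ?weak"
    by (rule finite_measure_mono)
  moreover have "0 \<le> \<delta>"
    using few_weak measure_nonneg[of \<mu> ?weak] by linarith
  then have "\<delta> / 10 \<le> real (card {n div 2 + 2..3 * n div 4}) * (\<delta> / N)"
    unfolding N_def by (rule card_middle_levels_bound[OF n])
  ultimately show "measure \<mu> {u \<in> X. max_votes P z l n u \<in> {n div 2 + 2..3 * n div 4}} <
      real (card {n div 2 + 2..3 * n div 4}) * (\<delta> / N)"
    using few_weak by linarith
qed

lemma topological_eigenvalue_if_local_approximation:
  fixes R P :: "(int \<Rightarrow> 'a) \<Rightarrow> complex"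
  assumes minimal: "minimal_subshift X" and "z \<noteq> 0"
    and R_meas [measurable]: "R \<in> borel_measurable \<mu>" and eigen: "AE x in \<mu>. R (shift x) = z * R x"
    and P_local: "depends_only_on X {-int l..int l} P" and n: "2 * l + 40 \<le> n"
    and cyl_bound: "\<forall>w\<in>lang X (n + 2 * l). \<delta> \<le> real (n + 2 * l) * measure \<mu> (cyl X w)"
    and P_err: "40 * measure \<mu> {x \<in> X. P x \<noteq> R x} < \<delta>"
      "4 * measure \<mu> {x \<in> X. P x \<noteq> R x} < measure \<mu> {x \<in> X. R x \<noteq> 0}"
  shows "topological_eigenvalue X z"
proof -
  have P_meas: "P \<in> borel_measurable \<mu>"
    by (rule borel_measurable_if_depends_only_on[OF _ P_local]) simp
  define Bad where "Bad = {x \<in> X. 4 * votes P z l n (R x) x \<le> 3 * n}"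
  have "Bad \<in> sets \<mu>"
    unfolding Bad_def by (rule votes_level_in_sets[OF P_meas R_meas])
  have Bad_le: "measure \<mu> Bad \<le> 4 * measure \<mu> {x \<in> X. P x \<noteq> R x}"
    unfolding Bad_def by (rule measure_few_correct_votes_le[OF R_meas P_meas eigen]) (use n in auto)
  have "\<not> {x \<in> X. R x \<noteq> 0} \<subseteq> Bad"
  proof
    assume "{x \<in> X. R x \<noteq> 0} \<subseteq> Bad"
    then have "measure \<mu> {x \<in> X. R x \<noteq> 0} \<le> measure \<mu> Bad"
      using \<open>Bad \<in> sets \<mu>\<close> by (rule finite_measure_mono)
    then show False
      using Bad_le P_err(2) by linarith
  qed
  then obtain y where "y \<in> X" "R y \<noteq> 0" "y \<notin> Bad"
    by blast
  then have y: "y \<in> X" "R y \<noteq> 0" "3 * n < 4 * votes P z l n (R y) y"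
    by (auto simp: Bad_def)
  have margin: "n div 2 + 2 \<le> max_votes P z l n x" if "x \<in> X" for x
  proof (rule clear_majority_everywhere[OF minimal \<open>z \<noteq> 0\<close> P_local R_meas n cyl_bound _ y(1,3) that])
    show "measure \<mu> {x \<in> X. 4 * votes P z l n (R x) x \<le> 3 * n} < \<delta> / 10"
      using Bad_le P_err(1) unfolding Bad_def by linarith
  qed
  have "n < 2 * votes P z l n (R y) y"
    using y(3) by linarith
  from topological_eigenvalue_if_majority_margin[OF subshift \<open>z \<noteq> 0\<close> P_local margin y(1) this y(2)]
  show ?thesis .
qed

lemma topological_eigenvalue_if_finite_eigenfunction:
  fixes R :: "(int \<Rightarrow> 'a) \<Rightarrow> complex"
  assumes minimal: "minimal_subshift X"
    and "\<delta> > 0" and cyl_bound: "\<exists>\<^sub>F N in sequentially. \<forall>w\<in>lang X N. \<delta> \<le> real N * measure \<mu> (cyl X w)"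
    and "z \<noteq> 0"
    and R_finite: "finite (range R)" and R_meas [measurable]: "R \<in> borel_measurable \<mu>"
    and eigen: "AE x in \<mu>. R (shift x) = z * R x" and R_nonzero: "\<not> (AE x in \<mu>. R x = 0)"
  shows "topological_eigenvalue X z"
proof -
  define \<rho> where "\<rho> = measure \<mu> {x \<in> X. R x \<noteq> 0}"
  have "0 < measure \<mu> {x \<in> space \<mu>. \<not> R x = 0}"
    by (rule measure_pos_if_not_AE[OF _ R_nonzero]) measurable
  then have "\<rho> > 0"
    by (simp add: \<rho>_def)
  define \<epsilon> where "\<epsilon> = min (\<delta> / 40) (\<rho> / 4)"
  have \<epsilon>: "\<epsilon> > 0" "40 * \<epsilon> \<le> \<delta>" "4 * \<epsilon> \<le> \<rho>"
    using \<open>\<delta> > 0\<close> \<open>\<rho> > 0\<close> by (auto simp: \<epsilon>_def min_def)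
  have "{x \<in> X. R x = c} \<in> sets \<mu>" for c
    using measurable_equality_set[OF R_meas borel_measurable_const[of c]] unfolding space_eq .
  then obtain l P where P_local: "depends_only_on X {-int l..int l} P"
      and P_err: "measure \<mu> {x \<in> X. P x \<noteq> R x} < \<epsilon>"
    by (rule exists_local_approximation[OF R_finite _ \<open>\<epsilon> > 0\<close>])
  have "\<exists>N\<ge>4 * l + 40. \<forall>w\<in>lang X N. \<delta> \<le> real N * measure \<mu> (cyl X w)"
    using cyl_bound unfolding frequently_sequentially by blast
  then obtain N where "4 * l + 40 \<le> N" and N_bound: "\<forall>w\<in>lang X N. \<delta> \<le> real N * measure \<mu> (cyl X w)"
    by blast
  define n where "n = N - 2 * l"
  have n: "2 * l + 40 \<le> n" "N = n + 2 * l"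
    using \<open>4 * l + 40 \<le> N\<close> by (simp_all add: n_def)
  show ?thesis
  proof (rule topological_eigenvalue_if_local_approximation[OF minimal \<open>z \<noteq> 0\<close> R_meas eigen P_local n(1)])
    show "\<forall>w\<in>lang X (n + 2 * l). \<delta> \<le> real (n + 2 * l) * measure \<mu> (cyl X w)"
      using N_bound unfolding n(2) .
    show "40 * measure \<mu> {x \<in> X. P x \<noteq> R x} < \<delta>"
      using P_err \<epsilon>(2) by linarith
    show "4 * measure \<mu> {x \<in> X. P x \<noteq> R x} < measure \<mu> {x \<in> X. R x \<noteq> 0}"
      using P_err \<epsilon>(3) unfolding \<rho>_def by linarith
  qed
qed
end

section \<open>Rational eigenvalues\<close>

definition round_root :: "nat \<Rightarrow> complex \<Rightarrow> complex" where
  "round_root b w = (if w = 0 then 0 else cis (2 * pi * \<lfloor>real b * Arg w / (2 * pi)\<rfloor> / b))"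

lemma round_root_measurable [measurable]: "round_root b \<in> borel_measurable borel"
  unfolding round_root_def Arg_def by measurable

lemma round_root_eq_0_iff [simp]: "round_root b w = 0 \<longleftrightarrow> w = 0"
  by (simp add: round_root_def)

lemma finite_range_round_root:
  assumes "b > 0"
  shows "finite (range (round_root b))"
proof (rule finite_subset)
  show "range (round_root b) \<subseteq> insert 0 {u. u ^ b = 1}"
  proof
    fix u assume "u \<in> range (round_root b)"
    then obtain w where "u = round_root b w"
      by blast
    moreover have "cis (2 * pi * m / b) ^ b = 1" for m :: int
      using assms by (simp add: Complex.DeMoivre)
    ultimately show "u \<in> insert 0 {u. u ^ b = 1}"
      by (simp add: round_root_def)
  qed
  show "finite (insert 0 {u :: complex. u ^ b = 1})"
    using assms by (simp add: finite_roots_unity)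
qed

lemma round_root_cis_mult:
  assumes "b > 0" "real b * t \<in> \<int>"
  shows "round_root b (cis (2 * pi * t) * w) = cis (2 * pi * t) * round_root b w"
proof (cases "w = 0")
  case False
  obtain a :: int where a: "real b * t = a"
    using assms(2) Ints_cases by metis
  have "cis (Arg (cis (2 * pi * t) * w) - (2 * pi * t + Arg w)) = 1"
    using False by (simp add: cis_divide[symmetric] cis_Arg sgn_mult sgn_zero_iff cis_mult[symmetric])
  then obtain m :: int where "Arg (cis (2 * pi * t) * w) - (2 * pi * t + Arg w) = m * (2 * pi)"
    unfolding cis_eq_1_iff by blast
  then have m: "Arg (cis (2 * pi * t) * w) = 2 * pi * t + Arg w + m * (2 * pi)"
    by linarith
  define s where "s = \<lfloor>real b * Arg w / (2 * pi)\<rfloor>"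
  have "real b * Arg (cis (2 * pi * t) * w) / (2 * pi) = real b * Arg w / (2 * pi) + of_int (a + int b * m)"
    using a unfolding m by (simp add: field_simps)
  then have "\<lfloor>real b * Arg (cis (2 * pi * t) * w) / (2 * pi)\<rfloor> = s + (a + int b * m)"
    unfolding s_def by (simp only: floor_add_int)
  then have "round_root b (cis (2 * pi * t) * w) = cis (2 * pi * (s + (a + int b * m)) / b)"
    using False by (simp add: round_root_def)
  also have "\<dots> = cis (2 * pi * t + 2 * pi * s / b + 2 * pi * m)"
  proof -
    have "2 * pi * of_int (s + (a + int b * m)) / real b = 2 * pi * t + 2 * pi * s / b + 2 * pi * m"
      using assms(1) by (simp add: a[symmetric] field_simps)
    then show ?thesis
      by simp
  qed
  also have "\<dots> = cis (2 * pi * t) * cis (2 * pi * s / b)"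
    by (simp add: cis_mult[symmetric])
  also have "\<dots> = cis (2 * pi * t) * round_root b w"
    using False by (simp add: round_root_def s_def)
  finally show ?thesis .
qed (simp add: round_root_def)

lemma finite_valued_eigenfunction_if_L2_eigenvalue:
  assumes "L2_eigenvalue \<mu> (cis (2 * pi * t))" "b > 0" "real b * t \<in> \<int>"
  obtains R where "finite (range R)" "R \<in> borel_measurable \<mu>"
    "AE x in \<mu>. R (shift x) = cis (2 * pi * t) * R x" "\<not> (AE x in \<mu>. R x = 0)"
proof -
  obtain f where f: "f \<in> borel_measurable \<mu>" "\<not> (AE x in \<mu>. f x = 0)"
      "AE x in \<mu>. f (shift x) = cis (2 * pi * t) * f x"
    using assms(1) unfolding L2_eigenvalue_def by blast
  show ?thesis
  proof (rule that[of "\<lambda>x. round_root b (f x)"])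
    show "finite (range (\<lambda>x. round_root b (f x)))"
      by (rule finite_subset[OF _ finite_range_round_root[OF assms(2)]]) auto
    show "(\<lambda>x. round_root b (f x)) \<in> borel_measurable \<mu>"
      using f(1) by measurable
    show "AE x in \<mu>. round_root b (f (shift x)) = cis (2 * pi * t) * round_root b (f x)"
      using f(3) by eventually_elim (simp add: round_root_cis_mult[OF assms(2,3)])
    show "\<not> (AE x in \<mu>. round_root b (f x) = 0)"
      using f(2) by simp
  qed
qed

theorem corollary3p15:
  fixes X :: "(int \<Rightarrow> 'a::finite) set" and \<mu> :: "(int \<Rightarrow> 'a) measure"
    and \<alpha> :: real
  assumes "minimal_subshift X"
    and "boshernitzan X"
    and "invariant_prob X \<mu>"
    and "\<forall>\<nu>. invariant_prob X \<nu> \<longrightarrow> \<nu> = \<mu>"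
    and "\<alpha> \<in> \<rat>"
    and "L2_eigenvalue \<mu> (exp (2 * pi * \<i> * complex_of_real \<alpha>))"
  shows "topological_eigenvalue X (exp (2 * pi * \<i> * complex_of_real \<alpha>))"
proof -
  interpret invariant_subshift X \<mu>
    using assms(1,3) by unfold_locales (simp_all add: minimal_subshift_def)
  have z: "exp (2 * pi * \<i> * complex_of_real \<alpha>) = cis (2 * pi * \<alpha>)"
    by (simp add: cis_conv_exp mult_ac)
  obtain a b :: int where "b > 0" "\<alpha> = of_int a / of_int b"
    using Rats_cases'[OF assms(5)] by blast
  then have "real (nat b) * \<alpha> \<in> \<int>" "nat b > 0"
    by simp_all
  with assms(6) obtain R where R: "finite (range R)" "R \<in> borel_measurable \<mu>"
      "AE x in \<mu>. R (shift x) = cis (2 * pi * \<alpha>) * R x" "\<not> (AE x in \<mu>. R x = 0)"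
    unfolding z by (elim finite_valued_eigenfunction_if_L2_eigenvalue)
  obtain \<nu> where "invariant_prob X \<nu>"
      "limsup (\<lambda>n. ereal (real n * Min ((\<lambda>u. measure \<nu> (cyl X u)) ` lang X n))) > 0"
    using assms(2) unfolding boshernitzan_def by blast
  moreover have "\<nu> = \<mu>"
    using assms(4) \<open>invariant_prob X \<nu>\<close> by blast
  ultimately obtain \<delta> where "\<delta> > 0"
      "\<exists>\<^sub>F N in sequentially. \<forall>w\<in>lang X N. \<delta> \<le> real N * measure \<mu> (cyl X w)"
    by (auto elim: boshernitzan_cylinder_bound)
  from topological_eigenvalue_if_finite_eigenfunction[OF assms(1) this _ R] show ?thesis
    unfolding z by simp
qed

end
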